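(* Let $T$ be a tree. Then for every dominating set $S$ of $T$, $|a(S)|\le 2\Gamma(T)-|S|$.
   Context: A dominating set of a graph $G=(V,E)$ is a set $S\subseteq V$ such that every vertex is in $S$ or adjacent to a vertex of $S$; it is minimal if no proper subset is dominating. $\Gamma(T)$ is the maximum size of a minimal dominating set of $T$. For a dominating set $S$, $a(S)=\{v\in S: S\setminus\{v\}\text{ is not a dominating set}\}$. *)

theory Defs
  imports Main
begin

definition simple_graph :: "'a set \<Rightarrow> 'a set set \<Rightarrow> bool" where
  "simple_graph V E \<longleftrightarrow> finite V \<and> (\<forall>e\<in>E. e \<subseteq> V \<and> card e = 2)"

definition adj :: "'a set set \<Rightarrow> 'a \<Rightarrow> 'a \<Rightarrow> bool" where
  "adj E u v \<longleftrightarrow> {u, v} \<in> E"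

definition is_walk :: "'a set \<Rightarrow> 'a set set \<Rightarrow> 'a list \<Rightarrow> bool" where
  "is_walk V E p \<longleftrightarrow> p \<noteq> [] \<and> set p \<subseteq> V \<and> (\<forall>i. Suc i < length p \<longrightarrow> adj E (p ! i) (p ! Suc i))"

definition connected_graph :: "'a set \<Rightarrow> 'a set set \<Rightarrow> bool" where
  "connected_graph V E \<longleftrightarrow>
     (\<forall>u\<in>V. \<forall>v\<in>V. \<exists>p. is_walk V E p \<and> hd p = u \<and> last p = v)"

definition is_cycle :: "'a set \<Rightarrow> 'a set set \<Rightarrow> 'a list \<Rightarrow> bool" where
  "is_cycle V E c \<longleftrightarrow> length c \<ge> 3 \<and> distinct c \<and> is_walk V E c \<and> adj E (last c) (hd c)"

definition is_tree :: "'a set \<Rightarrow> 'a set set \<Rightarrow> bool" where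
  "is_tree V E \<longleftrightarrow> simple_graph V E \<and> V \<noteq> {} \<and> connected_graph V E \<and> (\<nexists>c. is_cycle V E c)"

definition dominating :: "'a set \<Rightarrow> 'a set set \<Rightarrow> 'a set \<Rightarrow> bool" where
  "dominating V E S \<longleftrightarrow> S \<subseteq> V \<and> (\<forall>v\<in>V. v \<in> S \<or> (\<exists>u\<in>S. adj E u v))"

definition minimal_dominating :: "'a set \<Rightarrow> 'a set set \<Rightarrow> 'a set \<Rightarrow> bool" where
  "minimal_dominating V E S \<longleftrightarrow> dominating V E S \<and> (\<forall>S'. S' \<subset> S \<longrightarrow> \<not> dominating V E S')"

definition upper_domination :: "'a set \<Rightarrow> 'a set set \<Rightarrow> nat" where
  "upper_domination V E = Max (card ` {S. minimal_dominating V E S})"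

definition essential_set :: "'a set \<Rightarrow> 'a set set \<Rightarrow> 'a set \<Rightarrow> 'a set" where
  "essential_set V E S = {v\<in>S. \<not> dominating V E (S - {v})}"

end

theory Submission
  imports Defs
begin

(*
  Every essential vertex v of S has a private neighbour: a vertex whose closed neighbourhood
  meets S exactly in v. Let I be the essential vertices that are their own private neighbour
  and P the set of the other private neighbours, chosen one per vertex of a(S) - I. The choice
  is injective and P avoids S, so Y = (S - I) \<union> P has |S| - |I| + |a(S) - I| elements, and no
  vertex of I has a neighbour in I \<union> Y. A tree is bipartite, so a colour class C of Y has at
  least |Y|/2 elements and I \<union> C is independent. A maximal independent set containing it is
  a minimal dominating set, whence 2\<Gamma>(T) \<ge> 2|I| + |Y| = |a(S)| + |S|.
*)

lemma adj_commute: "adj E u v \<longleftrightarrow> adj E v u"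
  by (simp add: adj_def insert_commute)

lemma adj_simple_graphD:
  assumes "simple_graph V E" "adj E u v"
  shows "u \<noteq> v" "u \<in> V" "v \<in> V"
proof -
  have "{u, v} \<subseteq> V" "card {u, v} = 2"
    using assms by (auto simp: simple_graph_def adj_def)
  then show "u \<noteq> v" "u \<in> V" "v \<in> V" by auto
qed

lemma is_walk_iff_successively:
  "is_walk V E p \<longleftrightarrow> p \<noteq> [] \<and> set p \<subseteq> V \<and> successively (adj E) p"
  by (simp add: is_walk_def successively_conv_nth)

lemma is_walk_append_Cons_iff:
  "is_walk V E (xs @ y # ys) \<longleftrightarrow> is_walk V E (xs @ [y]) \<and> is_walk V E (y # ys)"
  by (auto simp: is_walk_iff_successively successively_append_iff)

lemma is_walk_rev: "is_walk V E (rev p) \<longleftrightarrow> is_walk V E p"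
proof -
  have "successively (\<lambda>x y. adj E y x) p \<longleftrightarrow> successively (adj E) p"
    by (intro successively_cong) (simp_all add: adj_commute)
  then show ?thesis by (simp add: is_walk_iff_successively)
qed

lemma cycle_if_odd_closed_walk:
  assumes "simple_graph V E"
  shows "is_walk V E (c @ [hd c]) \<Longrightarrow> odd (length c) \<Longrightarrow> \<exists>c'. is_cycle V E c'"
proof (induction c rule: length_induct)
  case (1 c)
  show ?case
  proof (cases "distinct c")
    case True
    have "c \<noteq> []" using "1.prems"(2) by auto
    then have c_walk: "is_walk V E c" "adj E (last c) (hd c)"
      using "1.prems"(1) by (auto simp: is_walk_iff_successively successively_append_iff)
    have "length c \<noteq> 1"
    proof
      assume "length c = 1"
      then obtain x where "c = [x]" by (cases c) auto
      then show False using c_walk(2) adj_simple_graphD(1)[OF assms] by auto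
    qed
    then have "length c \<ge> 3" using "1.prems"(2) by presburger
    then have "is_cycle V E c" using True c_walk by (simp add: is_cycle_def)
    then show ?thesis by blast
  next
    case False
    then obtain xs a ys zs where c: "c = xs @ [a] @ ys @ [a] @ zs"
      using not_distinct_decomp by blast
    define h where "h = hd c"
    have hd_short: "hd (xs @ a # zs) = h" by (cases xs) (simp_all add: c h_def)
    have "is_walk V E (xs @ a # ys @ a # zs @ [h])"
      using "1.prems"(1) by (simp add: c h_def)
    then have "is_walk V E (xs @ [a])" "is_walk V E ((a # ys) @ [a])" "is_walk V E (a # zs @ [h])"
      using is_walk_append_Cons_iff[of V E xs a "ys @ a # zs @ [h]"]
        is_walk_append_Cons_iff[of V E "a # ys" a "zs @ [h]"] by simp_all
    then have "is_walk V E ((a # ys) @ [hd (a # ys)])"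
      "is_walk V E ((xs @ a # zs) @ [hd (xs @ a # zs)])"
      using is_walk_append_Cons_iff[of V E xs a "zs @ [h]"] unfolding hd_short by simp_all
    moreover have "odd (length (a # ys)) \<or> odd (length (xs @ a # zs))"
      using "1.prems"(2) by (simp add: c) presburger
    moreover have "length (a # ys) < length c" "length (xs @ a # zs) < length c"
      by (simp_all add: c)
    ultimately show ?thesis using "1.IH" by blast
  qed
qed

lemma tree_two_colouring:
  assumes "is_tree V E"
  obtains col :: "'a \<Rightarrow> bool" where "\<And>u v. adj E u v \<Longrightarrow> col u \<noteq> col v"
proof -
  have g: "simple_graph V E" and conn: "connected_graph V E" and acyclic: "\<nexists>c. is_cycle V E c"
    using assms by (auto simp: is_tree_def)
  obtain r where r: "r \<in> V" using assms by (auto simp: is_tree_def)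
  obtain W where W: "\<And>v. v \<in> V \<Longrightarrow> is_walk V E (W v) \<and> hd (W v) = r \<and> last (W v) = v"
    using conn r unfolding connected_graph_def by metis
  have "even (length (W u)) \<noteq> even (length (W v))" if uv: "adj E u v" for u v
  proof
    assume same_parity: "even (length (W u)) = even (length (W v))"
    have "u \<in> V" "v \<in> V" using adj_simple_graphD[OF g uv] by auto
    then have p: "is_walk V E (W u)" "hd (W u) = r" "last (W u) = u"
      and q: "is_walk V E (W v)" "hd (W v) = r" "last (W v) = v"
      using W by auto
    obtain q' where q': "W v = r # q'" using q by (cases "W v") (auto simp: is_walk_def)
    define c where "c = W u @ rev q'"
    have "c @ [hd c] = W u @ rev (W v)"
      using p(1,2) q' by (cases "W u") (auto simp: c_def is_walk_def)
    moreover have "is_walk V E (W u @ rev (W v))"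
      using p q uv is_walk_rev[of V E "W v"]
      by (auto simp: is_walk_iff_successively successively_append_iff hd_rev)
    moreover have "odd (length c)"
      using same_parity p(1) q' by (auto simp: c_def is_walk_def)
    ultimately show False using cycle_if_odd_closed_walk[OF g] acyclic by metis
  qed
  then show thesis by (rule that)
qed

definition independent_set :: "'a set \<Rightarrow> 'a set set \<Rightarrow> 'a set \<Rightarrow> bool" where
  "independent_set V E J \<longleftrightarrow> J \<subseteq> V \<and> (\<forall>u\<in>J. \<forall>v\<in>J. \<not> adj E u v)"

lemma minimal_dominating_if_independent_set:
  assumes "independent_set V E M" "dominating V E M"
  shows "minimal_dominating V E M"
  unfolding minimal_dominating_def
proof (intro conjI allI impI notI assms(2))
  fix S' assume "S' \<subset> M" "dominating V E S'"
  then obtain v where "v \<in> M" "v \<notin> S'" by blast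
  then have "v \<in> V" using assms(1) by (auto simp: independent_set_def)
  then obtain u where "u \<in> S'" "adj E u v"
    using \<open>dominating V E S'\<close> \<open>v \<notin> S'\<close> by (auto simp: dominating_def)
  then show False using assms(1) \<open>S' \<subset> M\<close> \<open>v \<in> M\<close> by (auto simp: independent_set_def)
qed

lemma card_le_upper_domination:
  assumes "finite V" "minimal_dominating V E M"
  shows "card M \<le> upper_domination V E"
proof -
  have "{S. minimal_dominating V E S} \<subseteq> Pow V"
    by (auto simp: minimal_dominating_def dominating_def)
  then have "finite (card ` {S. minimal_dominating V E S})"
    using assms(1) by (meson finite_Pow_iff finite_imageI finite_subset)
  then show ?thesis unfolding upper_domination_def using assms(2) by (intro Max_ge) auto
qed

lemma independent_set_card_le_upper_domination:
  assumes g: "simple_graph V E" and J: "independent_set V E J"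
  shows "card J \<le> upper_domination V E"
proof -
  have fin: "finite V" using g by (simp add: simple_graph_def)
  have "finite {M. independent_set V E M}"
    using fin by (auto simp: independent_set_def intro: finite_subset[of _ "Pow V"])
  from finite_has_maximal2[OF this, of J] J
  obtain M where M: "independent_set V E M" "J \<subseteq> M"
    and maximal: "\<And>M'. independent_set V E M' \<Longrightarrow> M \<subseteq> M' \<Longrightarrow> M = M'"
    by auto
  have "dominating V E M"
    unfolding dominating_def
  proof (intro conjI ballI)
    show "M \<subseteq> V" using M(1) by (simp add: independent_set_def)
  next
    fix v assume v: "v \<in> V"
    show "v \<in> M \<or> (\<exists>u\<in>M. adj E u v)"
    proof (rule ccontr)
      assume undominated: "\<not> (v \<in> M \<or> (\<exists>u\<in>M. adj E u v))"
      moreover have "\<not> adj E v u" if "u \<in> M" for u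
        using undominated that adj_commute by metis
      ultimately have "independent_set V E (insert v M)"
        using M(1) v adj_simple_graphD(1)[OF g] by (auto simp: independent_set_def)
      then show False using maximal[of "insert v M"] undominated by blast
    qed
  qed
  then have "card M \<le> upper_domination V E"
    using M(1) fin by (intro card_le_upper_domination minimal_dominating_if_independent_set)
  moreover have "card J \<le> card M"
    using M(1,2) fin by (intro card_mono) (auto simp: independent_set_def intro: finite_subset)
  ultimately show ?thesis by simp
qed

lemma card_le_twice_colour_class:
  assumes "finite Y"
  obtains b :: bool where "card Y \<le> 2 * card {y\<in>Y. col y = b}"
proof -
  have "Y = {y\<in>Y. col y = True} \<union> {y\<in>Y. col y = False}" by auto
  then have "card Y = card {y\<in>Y. col y = True} + card {y\<in>Y. col y = False}"
    using assms by (subst card_Un_disjoint[symmetric]) auto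
  then show thesis using that[of True] that[of False] by linarith
qed

definition private_neighbour :: "'a set \<Rightarrow> 'a set set \<Rightarrow> 'a set \<Rightarrow> 'a \<Rightarrow> 'a \<Rightarrow> bool" where
  "private_neighbour V E S v x \<longleftrightarrow> x \<in> V \<and> (\<forall>u\<in>S. (u = x \<or> adj E u x) \<longleftrightarrow> u = v)"

lemma essential_set_has_private_neighbour:
  assumes "dominating V E S" "v \<in> essential_set V E S"
  shows "\<exists>x. private_neighbour V E S v x"
proof -
  have "v \<in> S" "\<not> dominating V E (S - {v})" using assms(2) by (auto simp: essential_set_def)
  then obtain x where "x \<in> V" "x \<notin> S - {v}" "\<forall>u\<in>S - {v}. \<not> adj E u x"
    using assms(1) by (auto simp: dominating_def)
  moreover have "x \<in> S \<or> (\<exists>u\<in>S. adj E u x)" using assms(1) \<open>x \<in> V\<close> by (auto simp: dominating_def)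
  ultimately show ?thesis
    using \<open>v \<in> S\<close> unfolding private_neighbour_def by blast
qed

lemma essential_set_decomposition:
  assumes g: "simple_graph V E" and dom: "dominating V E S"
  obtains I Y where "I \<subseteq> S" "Y \<subseteq> V" "I \<inter> Y = {}" "\<forall>u\<in>I. \<forall>y\<in>I \<union> Y. \<not> adj E u y"
    "card (essential_set V E S) + card S = 2 * card I + card Y"
proof -
  define A where "A = essential_set V E S"
  have "\<forall>v\<in>A. \<exists>x. private_neighbour V E S v x"
    using essential_set_has_private_neighbour[OF dom] unfolding A_def by blast
  then obtain p where p: "\<And>v. v \<in> A \<Longrightarrow> private_neighbour V E S v (p v)"
    by metis
  have AS: "A \<subseteq> S" and SV: "S \<subseteq> V" and fin: "finite S"
    using dom g by (auto simp: A_def essential_set_def dominating_def simple_graph_def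
        intro: finite_subset)
  define I where "I = {v\<in>A. p v = v}"
  define P where "P = p ` (A - I)"
  have p_outside: "p v \<notin> S" "adj E v (p v)" if "v \<in> A - I" for v
    using p[of v] that AS unfolding private_neighbour_def I_def by (auto dest: bspec[of _ _ v])
  have p_private: "u = v" if "v \<in> A" "u \<in> S" "adj E u (p v)" for u v
    using p[OF that(1)] that(2,3) unfolding private_neighbour_def by blast
  have "inj_on p (A - I)"
    by (intro inj_onI) (metis Diff_iff AS p_outside(2) p_private subsetD)
  then have card_P: "card P = card (A - I)" by (simp add: P_def card_image)
  have "P \<inter> S = {}" "P \<subseteq> V" using p_outside p unfolding P_def private_neighbour_def by auto
  moreover have "I \<subseteq> S" "finite A" using AS fin unfolding I_def by (auto intro: finite_subset)
  moreover have "\<not> adj E u y" if u: "u \<in> I" and y: "y \<in> S \<union> P" for u y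
  proof
    assume uy: "adj E u y"
    have "u \<in> A" "p u = u" "u \<in> S" using u AS by (auto simp: I_def)
    show False
    proof (cases "y \<in> S")
      case True
      then have "y = u" using p_private[OF \<open>u \<in> A\<close> True] uy adj_commute \<open>p u = u\<close> by metis
      then show False using uy adj_simple_graphD(1)[OF g] by blast
    next
      case False
      then obtain w where "w \<in> A - I" "y = p w" using y P_def by auto
      then show False using p_private[of w u] uy u \<open>u \<in> S\<close> by blast
    qed
  qed
  moreover have "card ((S - I) \<union> P) = card (S - I) + card P"
    using calculation fin by (intro card_Un_disjoint) (auto simp: P_def)
  moreover have "card (S - I) + card I = card S" "card (A - I) + card I = card A"
    using \<open>I \<subseteq> S\<close> \<open>finite A\<close> fin by (simp_all add: card_Diff_subset card_mono I_def finite_subset)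
  ultimately show thesis
    using card_P SV by (intro that[of I "(S - I) \<union> P"]) (auto simp: A_def)
qed

lemma essential_set_card_bound_bipartite:
  fixes col :: "'a \<Rightarrow> bool"
  assumes g: "simple_graph V E" and dom: "dominating V E S"
    and col: "\<And>u v. adj E u v \<Longrightarrow> col u \<noteq> col v"
  shows "card (essential_set V E S) + card S \<le> 2 * upper_domination V E"
proof -
  obtain I Y where IY: "I \<subseteq> S" "Y \<subseteq> V" "I \<inter> Y = {}"
    and I_isolated: "\<forall>u\<in>I. \<forall>y\<in>I \<union> Y. \<not> adj E u y"
    and card_IY: "card (essential_set V E S) + card S = 2 * card I + card Y"
    using essential_set_decomposition[OF g dom] by blast
  have "finite V" using g by (simp add: simple_graph_def)
  then have fin: "finite I" "finite Y"
    using IY dom by (meson dominating_def finite_subset subset_trans)+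
  obtain b where b: "card Y \<le> 2 * card {y\<in>Y. col y = b}"
    using card_le_twice_colour_class[OF fin(2), of col] by blast
  define J where "J = I \<union> {y\<in>Y. col y = b}"
  have "\<not> adj E u v" if "u \<in> J" "v \<in> J" for u v
  proof
    assume "adj E u v"
    moreover have "adj E v u" using calculation adj_commute by metis
    ultimately show False using that I_isolated col IY(3) unfolding J_def by blast
  qed
  then have "independent_set V E J"
    using IY dom unfolding J_def independent_set_def dominating_def by blast
  then have "card J \<le> upper_domination V E"
    by (rule independent_set_card_le_upper_domination[OF g])
  moreover have "card J = card I + card {y\<in>Y. col y = b}"
    unfolding J_def using fin IY(3) by (intro card_Un_disjoint) auto
  ultimately show ?thesis using card_IY b by linarith
qed

theorem lemma4p10:
  fixes V :: "'a set" and E :: "'a set set" and S :: "'a set"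
  assumes "is_tree V E"
    and "dominating V E S"
  shows "int (card (essential_set V E S)) \<le> 2 * int (upper_domination V E) - int (card S)"
proof -
  obtain col :: "'a \<Rightarrow> bool" where "\<And>u v. adj E u v \<Longrightarrow> col u \<noteq> col v"
    using tree_two_colouring[OF assms(1)] by blast
  moreover have "simple_graph V E" using assms(1) by (simp add: is_tree_def)
  ultimately have "card (essential_set V E S) + card S \<le> 2 * upper_domination V E"
    using essential_set_card_bound_bipartite assms(2) by blast
  then show ?thesis by linarith
qed

end
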